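(* Let $N\geq3$ and $\alpha\in\{+,0,-\}$. For all integers $n,m$ such that none of $n+m$, $n-m$ is divisible by $2N$, $$[H^0_n,W^{\alpha,0}_m]=2\sin\!\Bigl(\pi\tfrac{2n-m}{2N}\Bigr)W^{\alpha,1}_{n+m}+2\sin\!\Bigl(\pi\tfrac{2n+m}{2N}\Bigr)W^{\alpha,1}_{n-m}.$$
   Context: On $\mathcal{H}_N=(\mathbb{C}^2)^{\otimes N}$ let $c_j^\dagger=i^{j-1}\,i^{\sigma^z_1+\dots+\sigma^z_{j-1}}\sigma^+_j$, $c_j=i^{-j+1}\,i^{-\sigma^z_1-\dots-\sigma^z_{j-1}}\sigma^-_j$ (Jordan–Wigner fermions). Let $e_j=c_jc_{j+1}^\dagger+c_{j+1}c_j^\dagger+i(c_j^\dagger c_j-c_{j+1}^\dagger c_{j+1})$ ($1\le j\le N-1$), and for $1\leq j\leq N-2$: $W\!B^+_j=(-1)^j(c_j^\dagger c_{j+1}^\dagger+ic_j^\dagger c_{j+2}^\dagger-c_{j+1}^\dagger c_{j+2}^\dagger)$, $W\!B^0_j=-\tfrac12(1+ic_j^\dagger c_{j+1}-c_j^\dagger c_{j+2}+ic_{j+1}^\dagger c_j-2c_{j+1}^\dagger c_{j+1}-ic_{j+1}^\dagger c_{j+2}-c_{j+2}^\dagger c_j-ic_{j+2}^\dagger c_{j+1})$, $W\!B^-_j=(-1)^{j+1}(c_jc_{j+1}+ic_jc_{j+2}-c_{j+1}c_{j+2})$. Set $H^0_n=\sum_{j=1}^{N-1}\cos(\pi nj/N)e_j$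 and $W^{\alpha,0}_n=\sum_{j=1}^{N-2}\cos\bigl(\pi n(j+\tfrac12)/N\bigr)W\!B^\alpha_j$ for $n\in\mathbb{Z}$, and for $k\in\mathbb{Z}$ not divisible by $2N$ define $W^{\alpha,1}_k$ by $[H^0_0,W^{\alpha,0}_k]=-4\sin(\pi\tfrac{k}{2N})W^{\alpha,1}_k$. *)

theory Defs
  imports Complex_Main "HOL-Library.Function_Algebras"
begin

text \<open>Operators on (C^2)^(tensor N) are represented as 2^N x 2^N complex matrices,
  given as functions nat => nat => complex on computational basis indices a < 2^N,
  all entries outside the range {0..<2^N} being zero.
  Site j (1-indexed) corresponds to bit (j-1) of the basis index;
  bit value 1 means spin up (sigma^z = +1), bit value 0 means spin down.\<close>

type_synonym op = "nat \<Rightarrow> nat \<Rightarrow> complex"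

definition bit_at :: "nat \<Rightarrow> nat \<Rightarrow> bool" where
  "bit_at a j = odd (a div 2 ^ (j - 1))"

definition sz :: "nat \<Rightarrow> nat \<Rightarrow> int" where
  "sz a j = (if bit_at a j then 1 else -1)"

definition opmul :: "nat \<Rightarrow> op \<Rightarrow> op \<Rightarrow> op" where
  "opmul N A B = (\<lambda>a b. \<Sum>k<2 ^ N. A a k * B k b)"

definition opid :: "nat \<Rightarrow> op" where
  "opid N = (\<lambda>a b. if a = b \<and> a < 2 ^ N then 1 else 0)"

definition smul :: "complex \<Rightarrow> op \<Rightarrow> op" where
  "smul c A = (\<lambda>a b. c * A a b)"

definition comm :: "nat \<Rightarrow> op \<Rightarrow> op \<Rightarrow> op" where
  "comm N A B = opmul N A B - opmul N B A"

definition sigma_plus :: "nat \<Rightarrow> nat \<Rightarrow> op" where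
  "sigma_plus N j = (\<lambda>a b. if a < 2 ^ N \<and> b < 2 ^ N \<and> \<not> bit_at b j \<and> a = b + 2 ^ (j - 1)
                            then 1 else 0)"

definition sigma_minus :: "nat \<Rightarrow> nat \<Rightarrow> op" where
  "sigma_minus N j = (\<lambda>a b. sigma_plus N j b a)"

definition cdag :: "nat \<Rightarrow> nat \<Rightarrow> op" where
  "cdag N j = (\<lambda>a b. \<i> powi (int j - 1 + (\<Sum>k\<in>{1..<j}. sz a k)) * sigma_plus N j a b)"

definition cann :: "nat \<Rightarrow> nat \<Rightarrow> op" where
  "cann N j = (\<lambda>a b. \<i> powi (- int j + 1 - (\<Sum>k\<in>{1..<j}. sz a k)) * sigma_minus N j a b)"

definition e_op :: "nat \<Rightarrow> nat \<Rightarrow> op" where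
  "e_op N j = opmul N (cann N j) (cdag N (j+1)) + opmul N (cann N (j+1)) (cdag N j)
     + smul \<i> (opmul N (cdag N j) (cann N j) - opmul N (cdag N (j+1)) (cann N (j+1)))"

datatype alpha = APlus | AZero | AMinus

definition WB :: "nat \<Rightarrow> alpha \<Rightarrow> nat \<Rightarrow> op" where
  "WB N \<alpha> j = (case \<alpha> of
     APlus \<Rightarrow> smul ((-1) ^ j)
        (opmul N (cdag N j) (cdag N (j+1)) + smul \<i> (opmul N (cdag N j) (cdag N (j+2)))
         - opmul N (cdag N (j+1)) (cdag N (j+2)))
   | AZero \<Rightarrow> smul (-1/2)
        (opid N + smul \<i> (opmul N (cdag N j) (cann N (j+1)))
         - opmul N (cdag N j) (cann N (j+2))
         + smul \<i> (opmul N (cdag N (j+1)) (cann N j))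
         - smul 2 (opmul N (cdag N (j+1)) (cann N (j+1)))
         - smul \<i> (opmul N (cdag N (j+1)) (cann N (j+2)))
         - opmul N (cdag N (j+2)) (cann N j)
         - smul \<i> (opmul N (cdag N (j+2)) (cann N (j+1))))
   | AMinus \<Rightarrow> smul ((-1) ^ (j+1))
        (opmul N (cann N j) (cann N (j+1)) + smul \<i> (opmul N (cann N j) (cann N (j+2)))
         - opmul N (cann N (j+1)) (cann N (j+2))))"

definition H0 :: "nat \<Rightarrow> int \<Rightarrow> op" where
  "H0 N n = (\<Sum>j\<in>{1..N-1}. smul (of_real (cos (pi * real_of_int n * real j / real N))) (e_op N j))"

definition W0 :: "nat \<Rightarrow> alpha \<Rightarrow> int \<Rightarrow> op" where
  "W0 N \<alpha> n = (\<Sum>j\<in>{1..N-2}.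
      smul (of_real (cos (pi * real_of_int n * (real j + 1/2) / real N))) (WB N \<alpha> j))"

text \<open>W^{alpha,1}_k is defined (for 2N not dividing k) by
  [H^0_0, W^{alpha,0}_k] = -4 sin(pi k/(2N)) W^{alpha,1}_k.\<close>
definition W1 :: "nat \<Rightarrow> alpha \<Rightarrow> int \<Rightarrow> op" where
  "W1 N \<alpha> k = smul (of_real (-1 / (4 * sin (pi * real_of_int k / (2 * real N)))))
                   (comm N (H0 N 0) (W0 N \<alpha> k))"

end

theory Submission
  imports Defs
begin

text \<open>The Jordan--Wigner operators satisfy the canonical anticommutation relations, so the
  commutator of two fermion bilinears is again a combination of bilinears. Consequently
  [e_j, WB_l] vanishes unless the supports of e_j and WB_l overlap at one end only, and the two
  end contributions are tied together by [e_(l+2), WB_l] = - [e_l, WB_(l+1)]. Hence for every n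
  and m the commutator [H0_n, W0_m] is a combination of the operators Z_p = [e_(p-1), WB_p]
  whose coefficients are quadratic in cosines. This applies in particular to n = 0, which defines
  W1, and the theorem reduces to a product-to-sum identity between these coefficients.\<close>

section \<open>Operator algebra\<close>

definition supported :: "nat \<Rightarrow> op \<Rightarrow> bool" where
  "supported N A \<longleftrightarrow> (\<forall>a b. (2^N \<le> a \<or> 2^N \<le> b) \<longrightarrow> A a b = 0)"

definition anticomm :: "nat \<Rightarrow> op \<Rightarrow> op \<Rightarrow> op" where
  "anticomm N A B = opmul N A B + opmul N B A"

lemma op_ext: "(\<And>a b. A a b = B a b) \<Longrightarrow> A = (B::op)"
  by (intro ext)

lemma opmul_assoc: "opmul N (opmul N A B) C = opmul N A (opmul N B C)"
proof (intro ext)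
  fix a b
  have "opmul N (opmul N A B) C a b = (\<Sum>k<2^N. \<Sum>l<2^N. A a l * B l k * C k b)"
    unfolding opmul_def by (simp add: sum_distrib_right)
  also have "\<dots> = (\<Sum>l<2^N. \<Sum>k<2^N. A a l * B l k * C k b)"
    by (rule sum.swap)
  also have "\<dots> = opmul N A (opmul N B C) a b"
    unfolding opmul_def by (simp add: sum_distrib_left mult.assoc)
  finally show "opmul N (opmul N A B) C a b = opmul N A (opmul N B C) a b" .
qed

lemma opmul_add_left: "opmul N (A + B) C = opmul N A C + opmul N B C"
  unfolding opmul_def plus_fun_def by (simp add: distrib_right sum.distrib)

lemma opmul_add_right: "opmul N A (B + C) = opmul N A B + opmul N A C"
  unfolding opmul_def plus_fun_def by (simp add: distrib_left sum.distrib)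

lemma opmul_diff_left: "opmul N (A - B) C = opmul N A C - opmul N B C"
  unfolding opmul_def fun_diff_def by (simp add: left_diff_distrib sum_subtractf)

lemma opmul_diff_right: "opmul N A (B - C) = opmul N A B - opmul N A C"
  unfolding opmul_def fun_diff_def by (simp add: right_diff_distrib sum_subtractf)

lemma opmul_uminus_left: "opmul N (- A) C = - opmul N A C"
  unfolding opmul_def fun_Compl_def by (simp add: sum_negf)

lemma opmul_uminus_right: "opmul N A (- C) = - opmul N A C"
  unfolding opmul_def fun_Compl_def by (simp add: sum_negf)

lemma opmul_zero_left [simp]: "opmul N 0 C = 0"
  unfolding opmul_def zero_fun_def by simp

lemma opmul_zero_right [simp]: "opmul N A 0 = 0"
  unfolding opmul_def zero_fun_def by simp

lemma opmul_smul_left: "opmul N (smul c A) C = smul c (opmul N A C)"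
  unfolding opmul_def smul_def by (simp add: sum_distrib_left mult.assoc)

lemma opmul_smul_right: "opmul N A (smul c C) = smul c (opmul N A C)"
  unfolding opmul_def smul_def by (simp add: sum_distrib_left mult.left_commute)

lemma smul_add: "smul c (A + B) = smul c A + smul c B"
  unfolding smul_def plus_fun_def by (simp add: distrib_left)

lemma smul_diff: "smul c (A - B) = smul c A - smul c B"
  unfolding smul_def fun_diff_def by (simp add: right_diff_distrib)

lemma smul_uminus: "smul c (- B) = - smul c B"
  unfolding smul_def fun_Compl_def by simp

lemma smul_smul: "smul c (smul d A) = smul (c * d) A"
  unfolding smul_def by (simp add: mult.assoc)

lemma smul_add_coeff: "smul (c + d) A = smul c A + smul d A"
  unfolding smul_def plus_fun_def by (simp add: distrib_right)

lemma smul_diff_coeff: "smul (c - d) A = smul c A - smul d A"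
  unfolding smul_def fun_diff_def by (simp add: left_diff_distrib)

lemma smul_zero [simp]: "smul c 0 = 0"
  unfolding smul_def zero_fun_def by simp

lemma smul_zero_coeff [simp]: "smul 0 A = 0"
  unfolding smul_def zero_fun_def by simp

lemma smul_apply: "smul c A a b = c * A a b"
  by (simp add: smul_def)

lemma smul_sum: "smul c (sum f S) = (\<Sum>i\<in>S. smul c (f i))"
  using sum_comp_morphism[of "smul c" f S] by (simp add: smul_add o_def)

lemma supported_opmul: "supported N A \<Longrightarrow> supported N B \<Longrightarrow> supported N (opmul N A B)"
  unfolding supported_def opmul_def by auto

lemma opmul_opid_right: "supported N A \<Longrightarrow> opmul N A (opid N) = A"
proof (intro ext)
  fix a b assume A: "supported N A"
  show "opmul N A (opid N) a b = A a b"
  proof (cases "b < 2^N")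
    case True
    have "opmul N A (opid N) a b = (\<Sum>k<2^N. if k = b then A a k else 0)"
      unfolding opmul_def opid_def by (intro sum.cong) auto
    then show ?thesis using True by (simp add: sum.delta)
  next
    case False
    then show ?thesis using A unfolding supported_def opmul_def opid_def by auto
  qed
qed

lemma opmul_opid_left: "supported N A \<Longrightarrow> opmul N (opid N) A = A"
proof (intro ext)
  fix a b assume A: "supported N A"
  show "opmul N (opid N) A a b = A a b"
  proof (cases "a < 2^N")
    case True
    have "opmul N (opid N) A a b = (\<Sum>k<2^N. if a = k then A k b else 0)"
      unfolding opmul_def opid_def by (intro sum.cong) auto
    then show ?thesis using True by (simp add: sum.delta)
  next
    case False
    then show ?thesis using A unfolding supported_def opmul_def opid_def by auto
  qed
qed

lemma comm_add_left: "comm N (A + B) C = comm N A C + comm N B C"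
  by (simp add: comm_def opmul_add_left opmul_add_right)

lemma comm_add_right: "comm N C (A + B) = comm N C A + comm N C B"
  by (simp add: comm_def opmul_add_left opmul_add_right)

lemma comm_diff_left: "comm N (A - B) C = comm N A C - comm N B C"
  by (simp add: comm_def opmul_diff_left opmul_diff_right)

lemma comm_diff_right: "comm N C (A - B) = comm N C A - comm N C B"
  by (simp add: comm_def opmul_diff_left opmul_diff_right)

lemma comm_uminus_left: "comm N (- A) C = - comm N A C"
  by (simp add: comm_def opmul_uminus_left opmul_uminus_right)

lemma comm_uminus_right: "comm N C (- A) = - comm N C A"
  by (simp add: comm_def opmul_uminus_left opmul_uminus_right)

lemma comm_smul_left: "comm N (smul c A) C = smul c (comm N A C)"
  by (simp add: comm_def opmul_smul_left opmul_smul_right smul_diff)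

lemma comm_smul_right: "comm N C (smul c A) = smul c (comm N C A)"
  by (simp add: comm_def opmul_smul_left opmul_smul_right smul_diff)

lemma comm_zero_left [simp]: "comm N 0 C = 0"
  by (simp add: comm_def)

lemma comm_zero_right [simp]: "comm N C 0 = 0"
  by (simp add: comm_def)

lemma comm_sum_left: "comm N (sum f S) C = (\<Sum>i\<in>S. comm N (f i) C)"
  using sum_comp_morphism[of "\<lambda>X. comm N X C" f S] by (simp add: comm_add_left o_def)

lemma comm_sum_right: "comm N C (sum f S) = (\<Sum>i\<in>S. comm N C (f i))"
  using sum_comp_morphism[of "\<lambda>X. comm N C X" f S] by (simp add: comm_add_right o_def)

lemmas comm_linear = comm_add_left comm_add_right comm_diff_left comm_diff_right
  comm_uminus_left comm_uminus_right comm_smul_left comm_smul_right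

lemma comm_opid_right: "supported N A \<Longrightarrow> comm N A (opid N) = 0"
  by (simp add: comm_def opmul_opid_left opmul_opid_right)

text \<open>Moving z and w through x y one factor at a time, each exchange costs an anticommutator.\<close>

lemma comm_bilinear_anticomm:
  assumes sx: "supported N x" and sy: "supported N y" and sw: "supported N w"
    and xz: "anticomm N x z = smul \<alpha> (opid N)" and yz: "anticomm N y z = smul \<beta> (opid N)"
    and xw: "anticomm N x w = smul \<gamma> (opid N)" and yw: "anticomm N y w = smul \<delta> (opid N)"
  shows "comm N (opmul N x y) (opmul N z w) =
     smul \<beta> (opmul N x w) - smul \<alpha> (opmul N y w) + smul \<delta> (opmul N z x) - smul \<gamma> (opmul N z y)"
proof -
  let ?M = "opmul N"
  have yz': "?M y z = smul \<beta> (opid N) - ?M z y" using yz by (simp add: anticomm_def eq_diff_eq)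
  have xz': "?M x z = smul \<alpha> (opid N) - ?M z x" using xz by (simp add: anticomm_def eq_diff_eq)
  have yw': "?M y w = smul \<delta> (opid N) - ?M w y" using yw by (simp add: anticomm_def eq_diff_eq)
  have xw': "?M x w = smul \<gamma> (opid N) - ?M w x" using xw by (simp add: anticomm_def eq_diff_eq)
  have "?M (?M x y) (?M z w) = ?M x (?M (?M y z) w)"
    by (simp add: opmul_assoc)
  also have "\<dots> = smul \<beta> (?M x w) - ?M (?M x z) (?M y w)"
    unfolding yz' by (simp add: opmul_diff_left opmul_diff_right opmul_smul_left opmul_smul_right
        opmul_opid_left sw opmul_assoc)
  also have "?M (?M x z) (?M y w) = smul \<alpha> (?M y w) - ?M z (?M x (?M y w))"
    unfolding xz' by (simp add: opmul_diff_left opmul_smul_left opmul_opid_left supported_opmul sy sw opmul_assoc)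
  also have "?M x (?M y w) = smul \<delta> x - ?M (?M x w) y"
    unfolding yw' by (simp add: opmul_diff_right opmul_smul_right opmul_opid_right sx opmul_assoc)
  also have "?M (?M x w) y = smul \<gamma> y - ?M w (?M x y)"
    unfolding xw' by (simp add: opmul_diff_left opmul_smul_left opmul_opid_left sy opmul_assoc)
  finally have "?M (?M x y) (?M z w) = smul \<beta> (?M x w) - (smul \<alpha> (?M y w) -
      ?M z (smul \<delta> x - (smul \<gamma> y - ?M w (?M x y))))" .
  also have "\<dots> = smul \<beta> (?M x w) - smul \<alpha> (?M y w) + smul \<delta> (?M z x) - smul \<gamma> (?M z y)
      + ?M (?M z w) (?M x y)"
    by (simp add: opmul_diff_right opmul_smul_right opmul_assoc)
  finally show ?thesis unfolding comm_def by simp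
qed

section \<open>Jordan--Wigner fermions\<close>

definition ones_below :: "nat \<Rightarrow> nat \<Rightarrow> nat" where
  "ones_below b t = card {k. k < t \<and> bit b k}"

definition jw_sign :: "nat \<Rightarrow> nat \<Rightarrow> complex" where
  "jw_sign b t = (-1) ^ ones_below b t"

text \<open>Sites are counted from 0 here, so that site t is bit t of the basis index:
  fermion N True t is c^dagger_(t+1) and fermion N False t is c_(t+1).\<close>

definition fermion :: "nat \<Rightarrow> bool \<Rightarrow> nat \<Rightarrow> op" where
  "fermion N dag t = (if dag then cdag N (Suc t) else cann N (Suc t))"

lemma cdag_fermion: "cdag N (Suc t) = fermion N True t"
  by (simp add: fermion_def)

lemma cann_fermion: "cann N (Suc t) = fermion N False t"
  by (simp add: fermion_def)

lemma ones_below_Suc: "ones_below b (Suc t) = ones_below b t + (if bit b t then 1 else 0)"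
proof -
  have "{k. k < Suc t \<and> bit b k} = {k. k < t \<and> bit b k} \<union> (if bit b t then {t} else {})"
    by (auto simp: less_Suc_eq)
  then show ?thesis unfolding ones_below_def by (auto simp: card_insert_if)
qed

lemma bit_at_Suc: "bit_at a (Suc k) = bit a k"
  by (simp add: bit_at_def bit_iff_odd)

lemma sum_sz_eq: "(\<Sum>k\<in>{1..<Suc t}. sz a k) = 2 * int (ones_below a t) - int t"
proof (induction t)
  case 0
  then show ?case by (simp add: ones_below_def)
next
  case (Suc t)
  have "{1..<Suc (Suc t)} = insert (Suc t) {1..<Suc t}" by auto
  then have "(\<Sum>k\<in>{1..<Suc (Suc t)}. sz a k) = sz a (Suc t) + (\<Sum>k\<in>{1..<Suc t}. sz a k)"
    by simp
  then show ?case using Suc by (simp add: sz_def bit_at_Suc ones_below_Suc)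
qed

text \<open>The Jordan--Wigner string i^(j-1) i^(sz_1 + ... + sz_(j-1)) is i to twice the number of
  up spins below site j.\<close>

lemma cdag_phase: "\<i> powi (int (Suc t) - 1 + (\<Sum>k\<in>{1..<Suc t}. sz a k)) = jw_sign a t"
proof -
  have "int (Suc t) - 1 + (\<Sum>k\<in>{1..<Suc t}. sz a k) = int (2 * ones_below a t)"
    by (simp only: sum_sz_eq)
  then have "\<i> powi (int (Suc t) - 1 + (\<Sum>k\<in>{1..<Suc t}. sz a k)) = \<i> ^ (2 * ones_below a t)"
    by (simp only: power_int_of_nat)
  then show ?thesis by (simp add: jw_sign_def power_mult)
qed

lemma cann_phase: "\<i> powi (- int (Suc t) + 1 - (\<Sum>k\<in>{1..<Suc t}. sz a k)) = jw_sign a t"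
proof -
  have "- int (Suc t) + 1 - (\<Sum>k\<in>{1..<Suc t}. sz a k) = - int (2 * ones_below a t)"
    by (simp only: sum_sz_eq)
  then have "\<i> powi (- int (Suc t) + 1 - (\<Sum>k\<in>{1..<Suc t}. sz a k)) = inverse (\<i> ^ (2 * ones_below a t))"
    by (simp only: power_int_of_nat power_int_minus)
  then show ?thesis by (simp add: jw_sign_def power_mult power_inverse[symmetric])
qed

lemma flip_bit_less_exp: "b < 2^N \<Longrightarrow> t < N \<Longrightarrow> flip_bit t (b::nat) < 2^N"
  by (metis bit_take_bit_iff take_bit_nat_eq_self_iff bit_flip_bit_iff bit_eqI)

lemma add_exp_eq_flip_bit: "\<not> bit (b::nat) t \<Longrightarrow> b + 2^t = flip_bit t b"
  by (simp add: flip_bit_eq_if set_bit_eq)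

lemma flip_bit_flip_bit [simp]: "flip_bit t (flip_bit t (b::nat)) = b"
  by (rule bit_eqI) (auto simp: bit_simps)

lemma flip_bit_commute: "flip_bit s (flip_bit t (b::nat)) = flip_bit t (flip_bit s b)"
  by (rule bit_eqI) (auto simp: bit_simps)

lemma ones_below_flip_bit:
  "ones_below (flip_bit t b) s =
    (if t < s then (if bit b t then ones_below b s - 1 else Suc (ones_below b s)) else ones_below b s)"
proof -
  let ?S = "{k. k < s \<and> bit b k}"
  have "finite ?S" by simp
  consider "\<not> t < s" | "t < s" "bit b t" | "t < s" "\<not> bit b t" by blast
  then show ?thesis
  proof cases
    case 1
    then have "{k. k < s \<and> bit (flip_bit t b) k} = ?S" by (auto simp: bit_flip_bit_iff)
    with 1 show ?thesis by (simp add: ones_below_def)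
  next
    case 2
    then have "{k. k < s \<and> bit (flip_bit t b) k} = ?S - {t}" by (auto simp: bit_flip_bit_iff)
    with 2 show ?thesis by (simp add: ones_below_def)
  next
    case 3
    then have "{k. k < s \<and> bit (flip_bit t b) k} = insert t ?S" by (auto simp: bit_flip_bit_iff)
    with 3 \<open>finite ?S\<close> show ?thesis by (simp add: ones_below_def)
  qed
qed

lemma jw_sign_flip_bit: "jw_sign (flip_bit t b) s = (if t < s then - jw_sign b s else jw_sign b s)"
proof (cases "t < s \<and> bit b t")
  case True
  then have "ones_below b s > 0"
    unfolding ones_below_def by (auto simp: card_gt_0_iff)
  then obtain c where c: "ones_below b s = Suc c" using gr0_conv_Suc by blast
  show ?thesis using True unfolding jw_sign_def ones_below_flip_bit by (simp add: c)
next
  case False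
  then show ?thesis unfolding jw_sign_def ones_below_flip_bit by auto
qed

lemma jw_sign_square: "jw_sign b s * jw_sign b s = 1"
  unfolding jw_sign_def by (simp flip: power_add add: mult_2[symmetric])

lemma cdag_entry:
  assumes "t < N"
  shows "cdag N (Suc t) a b = (if b < 2^N \<and> \<not> bit b t \<and> a = flip_bit t b then jw_sign b t else 0)"
proof -
  have "cdag N (Suc t) a b =
      (if a < 2^N \<and> b < 2^N \<and> \<not> bit b t \<and> a = b + 2^t then jw_sign a t else 0)"
    unfolding cdag_def sigma_plus_def using cdag_phase[of t a] by (simp add: bit_at_Suc)
  then show ?thesis
    using assms by (auto simp: add_exp_eq_flip_bit flip_bit_less_exp jw_sign_flip_bit)
qed

lemma cann_entry:
  assumes "t < N"
  shows "cann N (Suc t) a b = (if a < 2^N \<and> \<not> bit a t \<and> b = flip_bit t a then jw_sign a t else 0)"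
proof -
  have "cann N (Suc t) a b =
      (if b < 2^N \<and> a < 2^N \<and> \<not> bit a t \<and> b = a + 2^t then jw_sign a t else 0)"
    unfolding cann_def sigma_minus_def sigma_plus_def using cann_phase[of t a] by (simp add: bit_at_Suc)
  then show ?thesis
    using assms by (auto simp: add_exp_eq_flip_bit flip_bit_less_exp)
qed

lemma fermion_entry:
  assumes "t < N"
  shows "fermion N dag t k b =
    (if b < 2^N \<and> bit b t \<noteq> dag \<and> k = flip_bit t b then jw_sign b t else 0)"
proof (cases dag)
  case True
  then show ?thesis using assms by (simp add: fermion_def cdag_entry)
next
  case False
  have "(k < 2^N \<and> \<not> bit k t \<and> b = flip_bit t k) \<longleftrightarrow> (b < 2^N \<and> bit b t \<and> k = flip_bit t b)"
    using flip_bit_less_exp[OF _ assms] by (auto simp: bit_flip_bit_iff)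
  moreover have "k = flip_bit t b \<Longrightarrow> jw_sign k t = jw_sign b t"
    by (simp add: jw_sign_flip_bit)
  ultimately show ?thesis using False assms by (auto simp: fermion_def cann_entry)
qed

lemma supported_fermion:
  assumes "t < N"
  shows "supported N (fermion N dag t)"
  unfolding supported_def using flip_bit_less_exp[OF _ assms] leD by (auto simp: fermion_entry[OF assms])

lemma fermion_product_entry:
  assumes s: "s < N" and t: "t < N"
  shows "opmul N (fermion N p s) (fermion N q t) a b =
    (if b < 2^N \<and> bit b t \<noteq> q \<and> bit (flip_bit t b) s \<noteq> p \<and> a = flip_bit s (flip_bit t b)
     then jw_sign (flip_bit t b) s * jw_sign b t else 0)"
proof -
  have "opmul N (fermion N p s) (fermion N q t) a b =
      (\<Sum>k<2^N. if k = flip_bit t b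
                then (if b < 2^N \<and> bit b t \<noteq> q then fermion N p s a k * jw_sign b t else 0) else 0)"
    unfolding opmul_def by (intro sum.cong refl) (auto simp: fermion_entry[OF t])
  also have "\<dots> = (if b < 2^N \<and> bit b t \<noteq> q then fermion N p s a (flip_bit t b) * jw_sign b t else 0)"
    using flip_bit_less_exp[OF _ t, of b] by (auto simp: sum.delta)
  finally show ?thesis
    using flip_bit_less_exp[OF _ t, of b] by (auto simp: fermion_entry[OF s])
qed

lemma anticomm_fermion:
  assumes "s < N" "t < N"
  shows "anticomm N (fermion N p s) (fermion N q t) = smul (of_bool (p \<noteq> q \<and> s = t)) (opid N)"
proof (rule op_ext)
  fix a b :: nat
  show "anticomm N (fermion N p s) (fermion N q t) a b = smul (of_bool (p \<noteq> q \<and> s = t)) (opid N) a b"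
  proof (cases "s = t")
    case True
    then show ?thesis using assms
      by (auto simp: anticomm_def fermion_product_entry smul_def opid_def bit_flip_bit_iff
          jw_sign_flip_bit jw_sign_square)
  next
    case False
    then have "jw_sign (flip_bit t b) s * jw_sign b t + jw_sign (flip_bit s b) t * jw_sign b s = 0"
      by (auto simp: jw_sign_flip_bit)
    with False show ?thesis using assms
      by (auto simp: anticomm_def fermion_product_entry smul_def opid_def bit_flip_bit_iff flip_bit_commute)
  qed
qed

lemma comm_fermion_bilinears:
  assumes "s1 < N" "s2 < N" "s3 < N" "s4 < N"
  shows "comm N (opmul N (fermion N p1 s1) (fermion N p2 s2)) (opmul N (fermion N p3 s3) (fermion N p4 s4)) =
     smul (of_bool (p2 \<noteq> p3 \<and> s2 = s3)) (opmul N (fermion N p1 s1) (fermion N p4 s4))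
   - smul (of_bool (p1 \<noteq> p3 \<and> s1 = s3)) (opmul N (fermion N p2 s2) (fermion N p4 s4))
   + smul (of_bool (p2 \<noteq> p4 \<and> s2 = s4)) (opmul N (fermion N p3 s3) (fermion N p1 s1))
   - smul (of_bool (p1 \<noteq> p4 \<and> s1 = s4)) (opmul N (fermion N p3 s3) (fermion N p2 s2))"
  by (rule comm_bilinear_anticomm) (simp_all add: assms supported_fermion anticomm_fermion)

lemma comm_fermion_bilinear_opid:
  "s < N \<Longrightarrow> t < N \<Longrightarrow> comm N (opmul N (fermion N p s) (fermion N q t)) (opid N) = 0"
  by (simp add: comm_opid_right supported_opmul supported_fermion)

lemma fermion_square:
  assumes "s < N"
  shows "opmul N (fermion N p s) (fermion N p s) = 0"
proof (rule op_ext)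
  fix a b
  have "2 * opmul N (fermion N p s) (fermion N p s) a b = anticomm N (fermion N p s) (fermion N p s) a b"
    by (simp add: anticomm_def)
  then show "opmul N (fermion N p s) (fermion N p s) a b = 0 a b"
    using assms by (simp add: anticomm_fermion)
qed

lemma fermion_swap:
  "t < s \<Longrightarrow> s < N \<Longrightarrow>
    opmul N (fermion N p s) (fermion N p t) = - opmul N (fermion N p t) (fermion N p s)"
  using anticomm_fermion[of s N t p p] by (simp add: anticomm_def eq_neg_iff_add_eq_0)

lemma cann_cdag_normal_order:
  "s < N \<Longrightarrow> t < N \<Longrightarrow> opmul N (fermion N False s) (fermion N True t) =
    smul (of_bool (s = t)) (opid N) - opmul N (fermion N True t) (fermion N False s)"
  using anticomm_fermion[of s N t False True] by (simp add: anticomm_def eq_diff_eq)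

lemma e_op_fermions:
  assumes "Suc t < N"
  shows "e_op N (Suc t) =
   - opmul N (fermion N True (Suc t)) (fermion N False t) - opmul N (fermion N True t) (fermion N False (Suc t))
   + smul \<i> (opmul N (fermion N True t) (fermion N False t))
   - smul \<i> (opmul N (fermion N True (Suc t)) (fermion N False (Suc t)))"
  using assms unfolding e_op_def
  by (simp add: cdag_fermion cann_fermion cann_cdag_normal_order smul_diff)

lemma WB_fermions: "WB N \<alpha> (Suc u) = (case \<alpha> of
     APlus \<Rightarrow> smul ((-1) ^ Suc u)
        (opmul N (fermion N True u) (fermion N True (Suc u))
         + smul \<i> (opmul N (fermion N True u) (fermion N True (Suc (Suc u))))
         - opmul N (fermion N True (Suc u)) (fermion N True (Suc (Suc u))))
   | AZero \<Rightarrow> smul (-1/2)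
        (opid N + smul \<i> (opmul N (fermion N True u) (fermion N False (Suc u)))
         - opmul N (fermion N True u) (fermion N False (Suc (Suc u)))
         + smul \<i> (opmul N (fermion N True (Suc u)) (fermion N False u))
         - smul 2 (opmul N (fermion N True (Suc u)) (fermion N False (Suc u)))
         - smul \<i> (opmul N (fermion N True (Suc u)) (fermion N False (Suc (Suc u))))
         - opmul N (fermion N True (Suc (Suc u))) (fermion N False u)
         - smul \<i> (opmul N (fermion N True (Suc (Suc u))) (fermion N False (Suc u))))
   | AMinus \<Rightarrow> smul ((-1) ^ (Suc (Suc u)))
        (opmul N (fermion N False u) (fermion N False (Suc u))
         + smul \<i> (opmul N (fermion N False u) (fermion N False (Suc (Suc u))))
         - opmul N (fermion N False (Suc u)) (fermion N False (Suc (Suc u)))))"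
proof -
  have "Suc u + 1 = Suc (Suc u)" "Suc u + 2 = Suc (Suc (Suc u))" by simp_all
  then show ?thesis unfolding WB_def by (simp only: cdag_fermion cann_fermion)
qed

section \<open>Local commutators\<close>

lemmas fermion_normal_order = fermion_square fermion_swap cann_cdag_normal_order

lemmas op_apply_simps = plus_fun_apply fun_diff_def fun_Compl_def smul_apply zero_fun_apply

lemma comm_e_WB_same:
  assumes "Suc (Suc u) < N"
  shows "comm N (e_op N (Suc u)) (WB N \<alpha> (Suc u)) = 0"
proof -
  have sites: "u < N" "Suc u < N" "Suc (Suc u) < N" using assms by auto
  show ?thesis
    by (cases \<alpha>; simp only: e_op_fermions WB_fermions alpha.case sites;
        simp only: comm_linear comm_fermion_bilinears comm_fermion_bilinear_opid sites;
        simp add: smul_add smul_diff smul_uminus smul_smul fermion_normal_order sites;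
        rule op_ext, simp add: op_apply_simps algebra_simps)
qed

lemma comm_e_WB_next:
  assumes "Suc (Suc u) < N"
  shows "comm N (e_op N (Suc (Suc u))) (WB N \<alpha> (Suc u)) = 0"
proof -
  have sites: "u < N" "Suc u < N" "Suc (Suc u) < N" using assms by auto
  show ?thesis
    by (cases \<alpha>; simp only: e_op_fermions WB_fermions alpha.case sites;
        simp only: comm_linear comm_fermion_bilinears comm_fermion_bilinear_opid sites;
        simp add: smul_add smul_diff smul_uminus smul_smul fermion_normal_order sites;
        rule op_ext, simp add: op_apply_simps algebra_simps)
qed

lemma comm_e_WB_far_left:
  assumes "Suc (Suc u) < N" "Suc (Suc t) \<le> u"
  shows "comm N (e_op N (Suc t)) (WB N \<alpha> (Suc u)) = 0"
proof -
  have sites: "u < N" "Suc u < N" "Suc (Suc u) < N" "t < N" "Suc t < N"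
    "t \<noteq> u" "t \<noteq> Suc u" "t \<noteq> Suc (Suc u)" "Suc t \<noteq> u" "Suc t \<noteq> Suc u" "Suc t \<noteq> Suc (Suc u)"
    using assms by auto
  show ?thesis
    by (cases \<alpha>; simp only: e_op_fermions WB_fermions alpha.case sites;
        simp only: comm_linear comm_fermion_bilinears comm_fermion_bilinear_opid sites;
        simp add: smul_add smul_diff smul_uminus smul_smul fermion_normal_order sites;
        rule op_ext, simp add: op_apply_simps algebra_simps)
qed

lemma comm_e_WB_far_right:
  assumes "Suc t < N" "Suc (Suc (Suc u)) \<le> t"
  shows "comm N (e_op N (Suc t)) (WB N \<alpha> (Suc u)) = 0"
proof -
  have sites: "u < N" "Suc u < N" "Suc (Suc u) < N" "t < N" "Suc t < N"
    "t \<noteq> u" "t \<noteq> Suc u" "t \<noteq> Suc (Suc u)" "Suc t \<noteq> u" "Suc t \<noteq> Suc u" "Suc t \<noteq> Suc (Suc u)"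
    using assms by auto
  show ?thesis
    by (cases \<alpha>; simp only: e_op_fermions WB_fermions alpha.case sites;
        simp only: comm_linear comm_fermion_bilinears comm_fermion_bilinear_opid sites;
        simp add: smul_add smul_diff smul_uminus smul_smul fermion_normal_order sites;
        rule op_ext, simp add: op_apply_simps algebra_simps)
qed

lemma comm_e_WB_shift:
  assumes "Suc (Suc (Suc u)) < N"
  shows "comm N (e_op N (Suc (Suc (Suc u)))) (WB N \<alpha> (Suc u)) =
    - comm N (e_op N (Suc u)) (WB N \<alpha> (Suc (Suc u)))"
proof -
  have sites: "u < N" "Suc u < N" "Suc (Suc u) < N" "Suc (Suc (Suc u)) < N" using assms by auto
  show ?thesis
    by (cases \<alpha>; simp only: e_op_fermions WB_fermions alpha.case sites;
        simp only: comm_linear comm_fermion_bilinears comm_fermion_bilinear_opid sites;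
        simp add: smul_add smul_diff smul_uminus smul_smul fermion_normal_order sites;
        rule op_ext, simp add: op_apply_simps algebra_simps)
qed

lemma comm_e_WB_band:
  assumes "1 \<le> j" "j \<le> N - 1" "1 \<le> l" "l \<le> N - 2"
  shows "comm N (e_op N j) (WB N \<alpha> l) =
    (if j + 1 = l then comm N (e_op N (l - 1)) (WB N \<alpha> l) else 0)
  + (if j = l + 2 then - comm N (e_op N l) (WB N \<alpha> (l + 1)) else 0)"
proof -
  obtain t where t: "j = Suc t" using assms(1) by (cases j) auto
  obtain u where u: "l = Suc u" using assms(3) by (cases l) auto
  have tN: "Suc t < N" and uN: "Suc (Suc u) < N" using assms t u by auto
  consider "Suc (Suc t) \<le> u" | "Suc t = u" | "t = u" | "t = Suc u" | "t = Suc (Suc u)"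
    | "Suc (Suc (Suc u)) \<le> t"
    by linarith
  then show ?thesis
  proof cases
    case 1
    then show ?thesis using comm_e_WB_far_left[OF uN 1] t u by simp
  next
    case 2
    then show ?thesis using t u by simp
  next
    case 3
    then show ?thesis using comm_e_WB_same[OF uN] t u by simp
  next
    case 4
    then show ?thesis using comm_e_WB_next[OF uN] t u by simp
  next
    case 5
    then have "Suc (Suc (Suc u)) < N" using tN by simp
    from comm_e_WB_shift[OF this] show ?thesis using 5 t u by simp
  next
    case 6
    then show ?thesis using comm_e_WB_far_right[OF tN 6] t u by simp
  qed
qed

lemma sum_band_row:
  fixes A :: "nat \<Rightarrow> nat \<Rightarrow> op" and s t :: "nat \<Rightarrow> complex"
  assumes l: "l \<in> {1..N-2}"
    and band: "\<And>j. 1 \<le> j \<Longrightarrow> j \<le> N - 1 \<Longrightarrow>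
      A j l = (if j + 1 = l then A (l - 1) l else 0) + (if j = l + 2 then - A l (l + 1) else 0)"
  shows "(\<Sum>j\<in>{1..N-1}. smul (t l) (smul (s j) (A j l))) =
      (if 2 \<le> l then smul (t l * s (l - 1)) (A (l - 1) l) else 0)
    - (if l + 3 \<le> N then smul (t l * s (l + 2)) (A l (l + 1)) else 0)"
proof -
  have "(\<Sum>j\<in>{1..N-1}. smul (t l) (smul (s j) (A j l))) =
     (\<Sum>j\<in>{1..N-1}. (if j = l - 1 then (if 2 \<le> l then smul (t l * s (l - 1)) (A (l - 1) l) else 0) else 0)
                  + (if j = l + 2 then - smul (t l * s (l + 2)) (A l (l + 1)) else 0))"
  proof (intro sum.cong refl)
    fix j assume "j \<in> {1..N-1}"
    then show "smul (t l) (smul (s j) (A j l)) =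
      (if j = l - 1 then (if 2 \<le> l then smul (t l * s (l - 1)) (A (l - 1) l) else 0) else 0)
        + (if j = l + 2 then - smul (t l * s (l + 2)) (A l (l + 1)) else 0)"
      using band[of j] l by (auto simp: smul_smul smul_add smul_uminus)
  qed
  also have "\<dots> = (if 2 \<le> l then smul (t l * s (l - 1)) (A (l - 1) l) else 0)
    - (if l + 3 \<le> N then smul (t l * s (l + 2)) (A l (l + 1)) else 0)"
  proof -
    have fin: "finite {1..N-1}" by simp
    have "(\<Sum>j\<in>{1..N-1}. if j = l - 1 then (if 2 \<le> l then smul (t l * s (l - 1)) (A (l - 1) l) else 0) else 0)
        = (if 2 \<le> l then smul (t l * s (l - 1)) (A (l - 1) l) else 0)"
      unfolding sum.delta[OF fin] using l by auto
    moreover have "(\<Sum>j\<in>{1..N-1}. if j = l + 2 then - smul (t l * s (l + 2)) (A l (l + 1)) else 0)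
        = - (if l + 3 \<le> N then smul (t l * s (l + 2)) (A l (l + 1)) else 0)"
      unfolding sum.delta[OF fin] using l by auto
    ultimately show ?thesis unfolding sum.distrib by simp
  qed
  finally show ?thesis .
qed

lemma double_sum_band:
  fixes A :: "nat \<Rightarrow> nat \<Rightarrow> op" and s t :: "nat \<Rightarrow> complex"
  assumes N3: "3 \<le> N"
    and band: "\<And>j l. 1 \<le> j \<Longrightarrow> j \<le> N - 1 \<Longrightarrow> 1 \<le> l \<Longrightarrow> l \<le> N - 2 \<Longrightarrow>
      A j l = (if j + 1 = l then A (l - 1) l else 0) + (if j = l + 2 then - A l (l + 1) else 0)"
  shows "(\<Sum>l\<in>{1..N-2}. \<Sum>j\<in>{1..N-1}. smul (t l) (smul (s j) (A j l))) =
     (\<Sum>p\<in>{2..N-2}. smul (t p * s (p - 1) - t (p - 1) * s (p + 1)) (A (p - 1) p))"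
proof -
  have inner: "(\<Sum>j\<in>{1..N-1}. smul (t l) (smul (s j) (A j l))) =
      (if 2 \<le> l then smul (t l * s (l - 1)) (A (l - 1) l) else 0)
    - (if l + 3 \<le> N then smul (t l * s (l + 2)) (A l (l + 1)) else 0)"
    if "l \<in> {1..N-2}" for l
    using that by (intro sum_band_row band) auto
  have lower: "(\<Sum>l\<in>{1..N-2}. if 2 \<le> l then smul (t l * s (l - 1)) (A (l - 1) l) else 0) =
      (\<Sum>l\<in>{2..N-2}. smul (t l * s (l - 1)) (A (l - 1) l))"
  proof -
    have "{l \<in> {1..N-2}. 2 \<le> l} = {2..N-2}" by auto
    then show ?thesis by (subst sum.inter_filter[symmetric]) (simp_all only: finite_atLeastAtMost)
  qed
  have "(\<Sum>l\<in>{1..N-2}. if l + 3 \<le> N then smul (t l * s (l + 2)) (A l (l + 1)) else 0) =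
      (\<Sum>l\<in>{1..N-3}. smul (t l * s (l + 2)) (A l (l + 1)))"
  proof -
    have "{l \<in> {1..N-2}. l + 3 \<le> N} = {1..N-3}" using N3 by auto
    then show ?thesis by (subst sum.inter_filter[symmetric]) (simp_all only: finite_atLeastAtMost)
  qed
  also have "\<dots> = (\<Sum>p\<in>{2..N-2}. smul (t (p - 1) * s (p + 1)) (A (p - 1) p))"
  proof -
    have bound: "N - 3 + 1 = N - 2" using N3 by simp
    have "(\<Sum>p\<in>{1+1..N-3+1}. smul (t (p - 1) * s (p + 1)) (A (p - 1) p)) =
        (\<Sum>l\<in>{1..N-3}. smul (t (l + 1 - 1) * s (l + 1 + 1)) (A (l + 1 - 1) (l + 1)))"
      by (rule sum.shift_bounds_cl_nat_ivl)
    then show ?thesis unfolding bound one_add_one by simp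
  qed
  finally have upper: "(\<Sum>l\<in>{1..N-2}. if l + 3 \<le> N then smul (t l * s (l + 2)) (A l (l + 1)) else 0) =
      (\<Sum>p\<in>{2..N-2}. smul (t (p - 1) * s (p + 1)) (A (p - 1) p))" .
  have "(\<Sum>l\<in>{1..N-2}. \<Sum>j\<in>{1..N-1}. smul (t l) (smul (s j) (A j l))) =
     (\<Sum>l\<in>{1..N-2}. if 2 \<le> l then smul (t l * s (l - 1)) (A (l - 1) l) else 0)
   - (\<Sum>l\<in>{1..N-2}. if l + 3 \<le> N then smul (t l * s (l + 2)) (A l (l + 1)) else 0)"
    by (simp only: inner sum_subtractf cong: sum.cong)
  then show ?thesis
    by (simp only: lower upper sum_subtractf[symmetric] smul_diff_coeff)
qed

lemma comm_e_WB_sums: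
  fixes s t :: "nat \<Rightarrow> complex"
  assumes "3 \<le> N"
  shows "comm N (\<Sum>j\<in>{1..N-1}. smul (s j) (e_op N j)) (\<Sum>l\<in>{1..N-2}. smul (t l) (WB N \<alpha> l)) =
    (\<Sum>p\<in>{2..N-2}. smul (t p * s (p - 1) - t (p - 1) * s (p + 1)) (comm N (e_op N (p - 1)) (WB N \<alpha> p)))"
proof -
  have "comm N (\<Sum>j\<in>{1..N-1}. smul (s j) (e_op N j)) (\<Sum>l\<in>{1..N-2}. smul (t l) (WB N \<alpha> l)) =
     (\<Sum>l\<in>{1..N-2}. \<Sum>j\<in>{1..N-1}. smul (t l) (smul (s j) (comm N (e_op N j) (WB N \<alpha> l))))"
    by (simp only: comm_sum_left comm_sum_right comm_smul_left comm_smul_right smul_sum)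
  also have "\<dots> =
    (\<Sum>p\<in>{2..N-2}. smul (t p * s (p - 1) - t (p - 1) * s (p + 1)) (comm N (e_op N (p - 1)) (WB N \<alpha> p)))"
    using assms comm_e_WB_band by (rule double_sum_band)
  finally show ?thesis .
qed

section \<open>The coefficients\<close>

definition H0_weight :: "nat \<Rightarrow> int \<Rightarrow> nat \<Rightarrow> real" where
  "H0_weight N k j = cos (pi * real_of_int k * real j / real N)"

definition W0_weight :: "nat \<Rightarrow> int \<Rightarrow> nat \<Rightarrow> real" where
  "W0_weight N k j = cos (pi * real_of_int k * (real j + 1/2) / real N)"

lemma comm_H0_W0:
  assumes "3 \<le> N"
  shows "comm N (H0 N a) (W0 N \<alpha> b) = (\<Sum>p\<in>{2..N-2}.
    smul (of_real (W0_weight N b p * H0_weight N a (p - 1) - W0_weight N b (p - 1) * H0_weight N a (p + 1)))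
      (comm N (e_op N (p - 1)) (WB N \<alpha> p)))"
  unfolding H0_def W0_def comm_e_WB_sums[OF assms]
  by (simp only: H0_weight_def W0_weight_def of_real_mult of_real_diff)

lemma W1_expansion:
  assumes "3 \<le> N"
  shows "W1 N \<alpha> k = (\<Sum>p\<in>{2..N-2}.
    smul (of_real (- 1 / (4 * sin (pi * real_of_int k / (2 * real N))) * (W0_weight N k p - W0_weight N k (p - 1))))
      (comm N (e_op N (p - 1)) (WB N \<alpha> p)))"
  unfolding W1_def comm_H0_W0[OF assms] by (simp add: H0_weight_def smul_sum smul_smul)

lemma cos_prod_diff_eq_sin_prod:
  fixes M K P x :: real
  shows "cos (M*(2*P+1)*x) * cos (2*K*(P-1)*x) - cos (M*(2*P-1)*x) * cos (2*K*(P+1)*x)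
       = sin ((2*K-M)*x) * sin (2*(K+M)*P*x) + sin ((2*K+M)*x) * sin (2*(K-M)*P*x)"
proof -
  have "cos (M*(2*P+1)*x - 2*K*(P-1)*x) = cos ((2*K+M)*x - 2*(K-M)*P*x)"
    by (rule arg_cong[where f=cos]) (simp add: algebra_simps)
  moreover have "cos (M*(2*P+1)*x + 2*K*(P-1)*x) = cos ((2*K-M)*x - 2*(K+M)*P*x)"
    by (subst cos_minus[symmetric]) (rule arg_cong[where f=cos], simp add: algebra_simps)
  moreover have "cos (M*(2*P-1)*x - 2*K*(P+1)*x) = cos ((2*K+M)*x + 2*(K-M)*P*x)"
    by (subst cos_minus[symmetric]) (rule arg_cong[where f=cos], simp add: algebra_simps)
  moreover have "cos (M*(2*P-1)*x + 2*K*(P+1)*x) = cos ((2*K-M)*x + 2*(K+M)*P*x)"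
    by (rule arg_cong[where f=cos]) (simp add: algebra_simps)
  ultimately show ?thesis
    unfolding cos_times_cos sin_times_sin by (simp add: field_simps)
qed

lemma cos_odd_mult_diff:
  fixes K P x :: real
  shows "cos (K*(2*P+1)*x) - cos (K*(2*(P-1)+1)*x) = - 2 * sin (2*K*P*x) * sin (K*x)"
proof -
  have "(K*(2*P+1)*x + K*(2*(P-1)+1)*x) / 2 = 2*K*P*x" "(K*(2*(P-1)+1)*x - K*(2*P+1)*x) / 2 = - (K*x)"
    by (simp_all add: algebra_simps)
  then show ?thesis unfolding cos_diff_cos by (simp only: sin_minus)
qed

lemma cos_product_identity:
  fixes K M P x :: real
  assumes "sin ((K + M) * x) \<noteq> 0" "sin ((K - M) * x) \<noteq> 0"
  shows "cos (M*(2*P+1)*x) * cos (2*K*(P-1)*x) - cos (M*(2*(P-1)+1)*x) * cos (2*K*(P+1)*x)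
     = 2 * sin ((2*K-M)*x) * (-1 / (4 * sin ((K+M)*x))) * (cos ((K+M)*(2*P+1)*x) - cos ((K+M)*(2*(P-1)+1)*x))
     + 2 * sin ((2*K+M)*x) * (-1 / (4 * sin ((K-M)*x))) * (cos ((K-M)*(2*P+1)*x) - cos ((K-M)*(2*(P-1)+1)*x))"
proof -
  have "2*(P-1)+1 = 2*P-1" by simp
  then show ?thesis
    using assms unfolding cos_odd_mult_diff
    by (simp only: cos_prod_diff_eq_sin_prod) (simp add: field_simps)
qed

lemma H0_W0_weights_identity:
  fixes n m :: int and N p :: nat
  assumes "1 \<le> p"
    and "sin (pi * real_of_int (n + m) / (2 * real N)) \<noteq> 0"
    and "sin (pi * real_of_int (n - m) / (2 * real N)) \<noteq> 0"
  shows "W0_weight N m p * H0_weight N n (p - 1) - W0_weight N m (p - 1) * H0_weight N n (p + 1)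
     = 2 * sin (pi * real_of_int (2 * n - m) / (2 * real N)) * (- 1 / (4 * sin (pi * real_of_int (n + m) / (2 * real N))))
         * (W0_weight N (n + m) p - W0_weight N (n + m) (p - 1))
     + 2 * sin (pi * real_of_int (2 * n + m) / (2 * real N)) * (- 1 / (4 * sin (pi * real_of_int (n - m) / (2 * real N))))
         * (W0_weight N (n - m) p - W0_weight N (n - m) (p - 1))"
proof -
  define x where "x = pi / (2 * real N)"
  have H: "H0_weight N k j = cos (2 * of_int k * real j * x)" for k j
    unfolding H0_weight_def x_def by (cases "N = 0") (simp_all add: field_simps)
  have W: "W0_weight N k j = cos (of_int k * (2 * real j + 1) * x)" for k j
    unfolding W0_weight_def x_def by (cases "N = 0") (simp_all add: field_simps)
  have S: "sin (pi * real_of_int k / (2 * real N)) = sin (of_int k * x)" for k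
    unfolding x_def by (simp add: field_simps)
  have p: "real (p - 1) = real p - 1" "real (p + 1) = real p + 1"
    using assms(1) by (simp_all add: of_nat_diff)
  have "sin ((of_int n + of_int m) * x) \<noteq> 0" "sin ((of_int n - of_int m) * x) \<noteq> 0"
    using assms(2,3) unfolding S by simp_all
  then show ?thesis
    unfolding H W S p unfolding of_int_add of_int_diff of_int_mult of_int_numeral by (rule cos_product_identity)
qed

lemma sin_pi_div_nonzero:
  assumes "0 < N" and "\<not> (2 * int N) dvd k"
  shows "sin (pi * real_of_int k / (2 * real N)) \<noteq> 0"
proof
  assume "sin (pi * real_of_int k / (2 * real N)) = 0"
  then obtain i :: int where "pi * real_of_int k / (2 * real N) = of_int i * pi"
    by (auto simp: sin_zero_iff_int2)
  then have "real_of_int k = real_of_int (2 * int N * i)"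
    using assms(1) by (simp add: field_simps)
  then show False
    using assms(2) by (simp only: of_int_eq_iff) simp
qed

theorem mainTheorem6:
  fixes N :: nat and \<alpha> :: alpha and n m :: int
  assumes "N \<ge> 3"
    and "\<not> (2 * int N) dvd (n + m)" and "\<not> (2 * int N) dvd (n - m)"
  shows "comm N (H0 N n) (W0 N \<alpha> m) =
           smul (of_real (2 * sin (pi * real_of_int (2 * n - m) / (2 * real N)))) (W1 N \<alpha> (n + m))
         + smul (of_real (2 * sin (pi * real_of_int (2 * n + m) / (2 * real N)))) (W1 N \<alpha> (n - m))"
  unfolding comm_H0_W0[OF assms(1)] W1_expansion[OF assms(1)]
    smul_sum smul_smul smul_add_coeff[symmetric] sum.distrib[symmetric]
proof (intro sum.cong refl arg_cong2[where f = smul], goal_cases)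
  case (1 p)
  then have "1 \<le> p" by simp
  have "0 < N" using assms(1) by simp
  have sum_nonzero: "sin (pi * real_of_int (n + m) / (2 * real N)) \<noteq> 0"
    using \<open>0 < N\<close> assms(2) by (rule sin_pi_div_nonzero)
  have diff_nonzero: "sin (pi * real_of_int (n - m) / (2 * real N)) \<noteq> 0"
    using \<open>0 < N\<close> assms(3) by (rule sin_pi_div_nonzero)
  show ?case
    using arg_cong[OF H0_W0_weights_identity[OF \<open>1 \<le> p\<close> sum_nonzero diff_nonzero], of complex_of_real]
    by (simp only: of_real_mult of_real_diff of_real_add mult.assoc)
qed

end
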